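(* Let $(q_i,k_i,v_i)_{i=1}^n$ be vectors in $\mathbb{R}^d$, $A_{ij}=\exp(\langle q_i,k_j\rangle/\sqrt d)$, $V\in\mathbb{R}^{n\times d}$ with rows $v_i^\top$, $D=\mathrm{diag}(A\mathbf{1}_n)$, let $I_{\mathrm{out}}\subseteq[n]$ be nonempty with $|I_{\mathrm{out}}|=n_{\mathrm{out}}$, and define $\hat A=\frac{n}{n_{\mathrm{out}}}\big(A_{ij}\mathbf{1}\{j\in I_{\mathrm{out}}\}\big)_{i,j=1}^n$ and $\hat D=\mathrm{diag}(\hat A\mathbf{1}_n)$. Then $$\|\hat D^{-1}\hat AV-D^{-1}AV\|_{\max}\le\min\Big(\big\|(\tfrac1nD)^{-1}\big\|_{\max},\big\|(\tfrac1n\hat D)^{-1}\big\|_{\max}\Big)\Big(\frac1n\|\hat AV-AV\|_{\max}+\frac1n\|A\mathbf{1}_n-\hat A\mathbf{1}_n\|_\infty\|V\|_{\max}\Big).$$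
   Context: $\|M\|_{\max}$ denotes the largest absolute entry of a matrix $M$ and $\|\cdot\|_\infty$ the largest absolute entry of a vector. *)

theory Defs
  imports "HOL-Analysis.Analysis"
begin

definition maxnorm :: "real^'m^'n \<Rightarrow> real" where
  "maxnorm M = Max (range (\<lambda>(i, j). \<bar>M $ i $ j\<bar>))"

definition vinfnorm :: "real^'n \<Rightarrow> real" where
  "vinfnorm x = Max (range (\<lambda>i. \<bar>x $ i\<bar>))"

definition diag_mat :: "real^'n \<Rightarrow> real^'n^'n" where
  "diag_mat x = (\<chi> i j. if i = j then x $ i else 0)"

end

theory Submission
  imports Defs
begin

text \<open>Entry (i, l) of \<open>D\<^sup>-\<^sup>1 A V\<close> is \<open>Y/a\<close> with \<open>Y = (A V)\<^sub>i\<^sub>l\<close> and \<open>a = (A 1)\<^sub>i\<close>, a weighted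
  average of column l of V with nonnegative weights, so \<open>\<bar>Y/a\<bar> \<le> \<parallel>V\<parallel>\<^sub>m\<^sub>a\<^sub>x\<close>. Writing
  \<open>X/b - Y/a = ((X - Y) + (Y/a)(a - b))/b\<close> bounds the entrywise error by
  \<open>(\<bar>X - Y\<bar> + \<bar>a - b\<bar> \<parallel>V\<parallel>\<^sub>m\<^sub>a\<^sub>x)/b\<close>, and exchanging the roles of the two matrices gives the
  same bound with denominator a, whence the minimum. Only nonnegativity of the entries and
  positivity of the row sums of \<open>A\<close> and \<open>\<hat>A\<close> are used.\<close>

lemma matrix_inv_eqI:
  fixes M :: "'a::semiring_1^'n^'m" and E :: "'a^'m^'n"
  assumes "M ** E = mat 1" "E ** M = mat 1"
  shows "matrix_inv M = E"
proof -
  let ?F = "matrix_inv M"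
  have F: "M ** ?F = mat 1 \<and> ?F ** M = mat 1"
    unfolding matrix_inv_def by (rule someI[where x = E]) (use assms in blast)
  have "?F = ?F ** (M ** E)" using assms by (simp add: matrix_mul_rid)
  also have "\<dots> = (?F ** M) ** E" by (simp add: matrix_mul_assoc)
  also have "\<dots> = E" using F by (simp add: matrix_mul_lid)
  finally show ?thesis .
qed

lemma diag_mat_mult_nth: "(diag_mat x ** M) $ i $ j = x $ i * M $ i $ j"
proof -
  have "(diag_mat x ** M) $ i $ j = (\<Sum>k\<in>UNIV. (if i = k then x $ i else 0) * M $ k $ j)"
    by (simp add: matrix_matrix_mult_def diag_mat_def)
  also have "\<dots> = (\<Sum>k\<in>UNIV. if i = k then x $ i * M $ i $ j else 0)"
    by (rule sum.cong) auto
  finally show ?thesis by simp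
qed

lemma matrix_inv_diag_mat:
  assumes "\<And>i. x $ i \<noteq> 0"
  shows "matrix_inv (diag_mat x) = diag_mat (\<chi> i. 1 / x $ i)"
  by (rule matrix_inv_eqI)
    (use assms in \<open>simp_all add: vec_eq_iff diag_mat_mult_nth, auto simp: mat_def diag_mat_def\<close>)

lemma scaleR_diag_mat: "c *\<^sub>R diag_mat x = diag_mat (c *\<^sub>R x)"
  by (auto simp: vec_eq_iff diag_mat_def)

lemma abs_le_maxnorm: "\<bar>M $ i $ j\<bar> \<le> maxnorm M"
  unfolding maxnorm_def by (rule Max_ge) (auto intro!: image_eqI[where x = "(i, j)"])

lemma maxnorm_nonneg: "0 \<le> maxnorm M"
  using abs_le_maxnorm[of M] abs_ge_zero order_trans by blast

lemma maxnorm_leI: "(\<And>i j. \<bar>M $ i $ j\<bar> \<le> B) \<Longrightarrow> maxnorm M \<le> B"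
  unfolding maxnorm_def by (subst Max_le_iff) auto

lemma abs_le_vinfnorm: "\<bar>x $ i\<bar> \<le> vinfnorm x"
  unfolding vinfnorm_def by (rule Max_ge) auto

lemma inverse_le_maxnorm_matrix_inv_diag:
  assumes "c > 0" "\<And>i. x $ i > 0"
  shows "1 / (c * x $ i) \<le> maxnorm (matrix_inv (c *\<^sub>R diag_mat x))"
proof -
  have "matrix_inv (c *\<^sub>R diag_mat x) = diag_mat (\<chi> i. 1 / (c * x $ i))"
    unfolding scaleR_diag_mat using assms by (subst matrix_inv_diag_mat) (auto simp: less_imp_neq[symmetric])
  moreover have "c * x $ i > 0" using assms by simp
  ultimately show ?thesis
    using abs_le_maxnorm[of "matrix_inv (c *\<^sub>R diag_mat x)" i i] by (simp add: diag_mat_def)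
qed

lemma matrix_inv_diag_mat_mult_nth:
  assumes "\<And>i. x $ i \<noteq> 0"
  shows "(matrix_inv (diag_mat x) ** M ** V) $ i $ l = (M ** V) $ i $ l / x $ i"
  using assms by (simp add: matrix_inv_diag_mat matrix_mul_assoc[symmetric] diag_mat_mult_nth)

lemma row_sum_pos:
  fixes M :: "real^'n^'m"
  assumes "\<And>j. M $ i $ j \<ge> 0" "M $ i $ j0 > 0"
  shows "(M *v (\<chi> i. 1)) $ i > 0"
  unfolding matrix_vector_mult_def using assms by (simp add: sum_pos2[of UNIV j0])

lemma abs_matrix_mult_nth_le_row_sum:
  fixes M :: "real^'n^'m" and V :: "real^'d^'n"
  assumes "\<And>j. M $ i $ j \<ge> 0"
  shows "\<bar>(M ** V) $ i $ l\<bar> \<le> (M *v (\<chi> i. 1)) $ i * maxnorm V"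
proof -
  have "\<bar>(M ** V) $ i $ l\<bar> \<le> (\<Sum>j\<in>UNIV. \<bar>M $ i $ j * V $ j $ l\<bar>)"
    unfolding matrix_matrix_mult_def by (simp add: sum_abs)
  also have "\<dots> \<le> (\<Sum>j\<in>UNIV. M $ i $ j * maxnorm V)"
    using assms abs_le_maxnorm[of V] by (intro sum_mono) (simp add: abs_mult mult_left_mono)
  also have "\<dots> = (M *v (\<chi> i. 1)) $ i * maxnorm V"
    by (simp add: matrix_vector_mult_def sum_distrib_right)
  finally show ?thesis .
qed

lemma abs_divide_diff_le:
  fixes X Y a b W :: real
  assumes "a > 0" "b > 0" "\<bar>Y\<bar> \<le> a * W"
  shows "\<bar>X / b - Y / a\<bar> \<le> (\<bar>X - Y\<bar> + \<bar>a - b\<bar> * W) / b"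
proof -
  define t where "t = Y / a * (a - b)"
  have "\<bar>Y / a\<bar> \<le> W" using assms by (simp add: abs_divide pos_divide_le_eq mult.commute)
  then have "\<bar>t\<bar> \<le> \<bar>a - b\<bar> * W"
    unfolding t_def abs_mult by (subst mult.commute) (rule mult_right_mono, auto)
  then have "\<bar>(X - Y) + t\<bar> \<le> \<bar>X - Y\<bar> + \<bar>a - b\<bar> * W"
    by (meson abs_triangle_ineq add_left_mono order_trans)
  moreover have "X / b - Y / a = ((X - Y) + t) / b"
    using assms unfolding t_def by (simp add: field_simps)
  ultimately show ?thesis
    using assms(2) by (simp add: abs_divide divide_right_mono)
qed

lemma abs_divide_diff_le_min:
  fixes X Y a b W :: real
  assumes "a > 0" "b > 0" "\<bar>Y\<bar> \<le> a * W" "\<bar>X\<bar> \<le> b * W"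
  shows "\<bar>X / b - Y / a\<bar> \<le> min (1 / a) (1 / b) * (\<bar>X - Y\<bar> + \<bar>a - b\<bar> * W)"
proof -
  let ?S = "\<bar>X - Y\<bar> + \<bar>a - b\<bar> * W"
  have "0 \<le> W" using assms(1,3) by (meson abs_ge_zero order_trans zero_le_mult_iff not_le)
  then have "0 \<le> ?S" by simp
  have "\<bar>X / b - Y / a\<bar> \<le> ?S / b" using assms(1-3) by (rule abs_divide_diff_le)
  moreover have "\<bar>X / b - Y / a\<bar> \<le> ?S / a"
    using abs_divide_diff_le[of b a X W Y] assms by (simp add: abs_minus_commute)
  ultimately show ?thesis
    using \<open>0 \<le> ?S\<close> by (simp add: min_mult_distrib_right)
qed

theorem row_normalization_perturbation:
  fixes M M' :: "real^'n^'n" and V :: "real^'d^'n" and c :: real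
  defines "r \<equiv> M *v (\<chi> i. 1)" and "r' \<equiv> M' *v (\<chi> i. 1)"
  assumes M_nonneg: "\<And>i j. M $ i $ j \<ge> 0" and M'_nonneg: "\<And>i j. M' $ i $ j \<ge> 0"
    and r_pos: "\<And>i. r $ i > 0" and r'_pos: "\<And>i. r' $ i > 0" and "c > 0"
  shows "maxnorm (matrix_inv (diag_mat r') ** M' ** V - matrix_inv (diag_mat r) ** M ** V)
    \<le> min (maxnorm (matrix_inv (c *\<^sub>R diag_mat r))) (maxnorm (matrix_inv (c *\<^sub>R diag_mat r')))
        * (c * maxnorm (M' ** V - M ** V) + c * vinfnorm (r - r') * maxnorm V)"
proof (rule maxnorm_leI)
  fix i l
  let ?X = "(M' ** V) $ i $ l" and ?Y = "(M ** V) $ i $ l"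
  let ?m = "min (maxnorm (matrix_inv (c *\<^sub>R diag_mat r))) (maxnorm (matrix_inv (c *\<^sub>R diag_mat r')))"
  let ?E = "maxnorm (M' ** V - M ** V)" and ?F = "vinfnorm (r - r')" and ?W = "maxnorm V"
  have "1 / r $ i \<le> c * maxnorm (matrix_inv (c *\<^sub>R diag_mat r))"
    using inverse_le_maxnorm_matrix_inv_diag[OF \<open>c > 0\<close> r_pos, of i] \<open>c > 0\<close> r_pos[of i]
    by (simp add: field_simps)
  moreover have "1 / r' $ i \<le> c * maxnorm (matrix_inv (c *\<^sub>R diag_mat r'))"
    using inverse_le_maxnorm_matrix_inv_diag[OF \<open>c > 0\<close> r'_pos, of i] \<open>c > 0\<close> r'_pos[of i]
    by (simp add: field_simps)
  ultimately have min_le: "min (1 / r $ i) (1 / r' $ i) \<le> c * ?m"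
    using \<open>c > 0\<close> by (simp add: min_mult_distrib_left min.coboundedI1 min.coboundedI2)
  have "\<bar>(matrix_inv (diag_mat r') ** M' ** V - matrix_inv (diag_mat r) ** M ** V) $ i $ l\<bar>
      = \<bar>?X / r' $ i - ?Y / r $ i\<bar>"
    using r_pos r'_pos by (simp add: matrix_inv_diag_mat_mult_nth less_imp_neq[symmetric])
  also have "\<dots> \<le> min (1 / r $ i) (1 / r' $ i) * (\<bar>?X - ?Y\<bar> + \<bar>r $ i - r' $ i\<bar> * ?W)"
    using r_pos r'_pos unfolding r_def r'_def
    by (intro abs_divide_diff_le_min abs_matrix_mult_nth_le_row_sum M_nonneg M'_nonneg)
  also have "\<dots> \<le> (c * ?m) * (?E + ?F * ?W)"
  proof (rule mult_mono[OF min_le])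
    show "\<bar>?X - ?Y\<bar> + \<bar>r $ i - r' $ i\<bar> * ?W \<le> ?E + ?F * ?W"
      using abs_le_maxnorm[of "M' ** V - M ** V" i l] abs_le_vinfnorm[of "r - r'" i] maxnorm_nonneg[of V]
      by (intro add_mono mult_right_mono) auto
    show "0 \<le> c * ?m"
      by (rule order_trans[OF _ min_le]) (simp add: r_pos r'_pos less_imp_le)
  qed (simp add: maxnorm_nonneg)
  also have "\<dots> = ?m * (c * ?E + c * ?F * ?W)" by (simp add: algebra_simps)
  finally show "\<bar>(matrix_inv (diag_mat r') ** M' ** V - matrix_inv (diag_mat r) ** M ** V) $ i $ l\<bar>
      \<le> ?m * (c * ?E + c * ?F * ?W)" .
qed

theorem lemmaF1:
  fixes q k v :: "'n::finite \<Rightarrow> real^'d::finite"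
    and A Ahat D Dhat :: "real^'n^'n"
    and V :: "real^'d^'n"
    and Iout :: "'n set"
  assumes A_def: "A = (\<chi> i j. exp ((q i \<bullet> k j) / sqrt (real CARD('d))))"
    and V_def: "V = (\<chi> i. v i)"
    and D_def: "D = diag_mat (A *v (\<chi> i. 1))"
    and Iout_ne: "Iout \<noteq> {}"
    and Ahat_def: "Ahat = (real CARD('n) / real (card Iout)) *\<^sub>R
                     (\<chi> i j. if j \<in> Iout then A $ i $ j else 0)"
    and Dhat_def: "Dhat = diag_mat (Ahat *v (\<chi> i. 1))"
  shows "maxnorm (matrix_inv Dhat ** Ahat ** V - matrix_inv D ** A ** V)
    \<le> min (maxnorm (matrix_inv ((1 / real CARD('n)) *\<^sub>R D)))
            (maxnorm (matrix_inv ((1 / real CARD('n)) *\<^sub>R Dhat)))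
        * ((1 / real CARD('n)) * maxnorm (Ahat ** V - A ** V)
           + (1 / real CARD('n)) * vinfnorm (A *v (\<chi> i. 1) - Ahat *v (\<chi> i. 1)) * maxnorm V)"
proof -
  obtain j0 where "j0 \<in> Iout" using Iout_ne by blast
  have "card Iout > 0" using Iout_ne by (simp add: card_gt_0_iff)
  have A_pos: "A $ i $ j > 0" for i j unfolding A_def by simp
  have Ahat_nth: "Ahat $ i $ j = real CARD('n) / real (card Iout) * (if j \<in> Iout then A $ i $ j else 0)"
    for i j unfolding Ahat_def by simp
  have Ahat_nonneg: "Ahat $ i $ j \<ge> 0" for i j
    unfolding Ahat_nth using A_pos[of i j] by simp
  have "Ahat $ i $ j0 > 0" for i
    unfolding Ahat_nth using A_pos[of i j0] \<open>j0 \<in> Iout\<close> \<open>card Iout > 0\<close> by simp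
  then have "(Ahat *v (\<chi> i. 1)) $ i > 0" for i
    using Ahat_nonneg by (rule row_sum_pos[rotated])
  moreover have "(A *v (\<chi> i. 1)) $ i > 0" for i
    using A_pos by (intro row_sum_pos[of A i i]) (auto intro: less_imp_le)
  ultimately show ?thesis
    unfolding D_def Dhat_def using A_pos Ahat_nonneg
    by (intro row_normalization_perturbation) (auto intro: less_imp_le)
qed

end
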